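(* Consider the flat DAgger algorithm with a halving learner described in the context, learning over the full policy class $\Pi_{\mathrm{FULL}}=\{(\mu,\{\pi_g\}_{g\in\mathcal{G}}):\ \mu\in\mathcal{M},\ \pi_g\in\Pi_{\mathrm{LO}}\}$, where $\mathcal{M}$ and $\Pi_{\mathrm{LO}}$ are finite, and suppose the expert policy is realizable, i.e. $(\mu^\star,\{\pi^\star_g\}_{g\in\mathcal{G}})\in\Pi_{\mathrm{FULL}}$. Then the total cost incurred by the expert in flat DAgger by round $T$ is at most $$T\,C^{I}_{\mathrm{FULL}} + \bigl(\log_2|\mathcal{M}| + |\mathcal{G}|\log_2|\Pi_{\mathrm{LO}}|\bigr)\,C^{L}_{\mathrm{FULL}}.$$
   Context: Setting. There is a state space $\mathcal{S}$, an action space $\mathcal{A}$ and a finite set of subgoals $\mathcal{G}$. A hierarchical policy consists of a meta-controller $\mu:\mathcal{S}\to\mathcal{G}$ and, for each $g\in\mathcal{G}$, a subpolicy $\pi_g$ mapping a state to an action together with a termination signal $\omega\in\{0,1\}$. An episode starts at a start state $s$; repeatedly $g=\mu(s)$ is chosen and $\pi_g$ is rolled out from $s$ until it signals termination, after which $s$ is the last state reached; the concatenation of these low-level trajectories is the full trajectory $\tau_{\mathrm{FULL}}$. The expert has a hierarchical policy $(\mu^\star,\{\pi^\star_g\}_{g\in\mathcal{G}})$. $\mathcal{M}$ is a finite class of meta-controllers and $\Pi_{\mathrm{LO}}$ a finite class of subpolicies; the flat learner treats elements of $\Pi_{\mathrm{FULL}}$ as monolithic policies and is otherwise oblivious to the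 hierarchical structure. Expert operations and costs (per invocation): $\mathrm{Inspect}_{\mathrm{FULL}}(\tau_{\mathrm{FULL}})$ returns Pass/Fail according to whether the overall task was accomplished, cost $C^{I}_{\mathrm{FULL}}$; $\mathrm{Label}_{\mathrm{FULL}}(\tau_{\mathrm{FULL}})$ returns the expert's labels (the expert's high-level and low-level decisions) on every state of the full trajectory, cost $C^{L}_{\mathrm{FULL}}$. The expert is consistent: an episode on which the executed policy agrees with the expert policy at every visited state passes $\mathrm{Inspect}_{\mathrm{FULL}}$. Learner. The halving algorithm over $\Pi_{\mathrm{FULL}}$ maintains a version space (initially $\Pi_{\mathrm{FULL}}$), acts by majority vote of the version space, and upon receiving labeled data removes all policies inconsistent with the labels. Flat DAgger (modified version). In each round $t=1,\dots,T$: obtain a new environment instance, execute the current policy to obtain $\tau_{\mathrm{FULL}}$, and call $\mathrm{Inspect}_{\mathrm{FULL}}(\tau_{\mathrm{FULL}})$; only if it returns Fail, call $\mathrm{Label}_{\mathrm{FULL}}(\tau_{\mathrm{FULL}})$ and add the labels to the data; then update the halving learner. The total expert cost is the sum of costs of all operations invoked. *)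

theory Defs
  imports Complex_Main
begin

text \<open>A hierarchical policy: meta-controller mu :: 's => 'g and subpolicies
  pi :: 'g => 's => ('a action x termination signal).\<close>
type_synonym ('s,'g,'a) hpol = "('s \<Rightarrow> 'g) \<times> ('g \<Rightarrow> 's \<Rightarrow> 'a \<times> bool)"

text \<open>A decision point: the current state together with the active subgoal
  (None = a subgoal boundary, where the meta-controller is queried).\<close>
type_synonym ('s,'g) point = "'s \<times> 'g option"

type_synonym ('g,'a) decision = "'g \<times> ('a \<times> bool)"

type_synonym ('s,'g,'a) traj = "(('s,'g) point \<times> ('g,'a) decision) list"

definition dec :: "('s,'g,'a) hpol \<Rightarrow> ('s,'g) point \<Rightarrow> ('g,'a) decision" where
  "dec h x = (case x of
      (s, None) \<Rightarrow> (fst h s, snd h (fst h s) s)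
    | (s, Some g) \<Rightarrow> (g, snd h g s))"

record ('s,'a) env_inst =
  start :: 's
  trans :: "'s \<Rightarrow> 'a \<Rightarrow> 's"
  horizon :: nat

fun run :: "(('s,'g) point \<Rightarrow> ('g,'a) decision) \<Rightarrow> ('s \<Rightarrow> 'a \<Rightarrow> 's) \<Rightarrow> nat
            \<Rightarrow> ('s,'g) point \<Rightarrow> ('s,'g,'a) traj" where
  "run f tr 0 x = []"
| "run f tr (Suc n) x =
     (let d = f x; g = fst d; a = fst (snd d); w = snd (snd d)
      in (x, d) # run f tr n (tr (fst x) a, if w then None else Some g))"

definition episode :: "(('s,'g) point \<Rightarrow> ('g,'a) decision) \<Rightarrow> ('s,'a) env_inst \<Rightarrow> ('s,'g,'a) traj" where
  "episode f e = run f (trans e) (horizon e) (start e, None)"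

definition full_class :: "('s \<Rightarrow> 'g) set \<Rightarrow> ('s \<Rightarrow> 'a \<times> bool) set \<Rightarrow> ('s,'g,'a) hpol set" where
  "full_class M PiLO = {h. fst h \<in> M \<and> (\<forall>g. snd h g \<in> PiLO)}"

definition mv :: "('s,'g,'a) hpol set \<Rightarrow> ('s,'g) point \<Rightarrow> ('g,'a) decision" where
  "mv V x = (SOME y. \<forall>y'. card {h\<in>V. dec h x = y'} \<le> card {h\<in>V. dec h x = y})"

definition labels :: "('s,'g,'a) hpol \<Rightarrow> ('s,'g,'a) traj \<Rightarrow> (('s,'g) point \<times> ('g,'a) decision) list" where
  "labels ex tau = map (\<lambda>(x,_). (x, dec ex x)) tau"

definition consistent :: "('s,'g,'a) hpol \<Rightarrow> (('s,'g) point \<times> ('g,'a) decision) list \<Rightarrow> bool" where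
  "consistent h L = (\<forall>(x,y)\<in>set L. dec h x = y)"

text \<open>Version space of the halving learner at the start of round t+1 (t = 0,1,...),
  given environment instances envs t and inspection outcomes insp t.\<close>
fun vspace :: "('s \<Rightarrow> 'g) set \<Rightarrow> ('s \<Rightarrow> 'a \<times> bool) set \<Rightarrow> ('s,'g,'a) hpol
   \<Rightarrow> (nat \<Rightarrow> ('s,'a) env_inst) \<Rightarrow> (nat \<Rightarrow> ('s,'g,'a) traj \<Rightarrow> bool) \<Rightarrow> nat \<Rightarrow> ('s,'g,'a) hpol set" where
  "vspace M PiLO ex envs insp 0 = full_class M PiLO"
| "vspace M PiLO ex envs insp (Suc t) =
     (let V = vspace M PiLO ex envs insp t; tau = episode (mv V) (envs t)
      in if insp t tau then V else {h\<in>V. consistent h (labels ex tau)})"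

definition dagger_traj where
  "dagger_traj M PiLO ex envs insp t = episode (mv (vspace M PiLO ex envs insp t)) (envs t)"

definition dagger_cost :: "('s \<Rightarrow> 'g) set \<Rightarrow> ('s \<Rightarrow> 'a \<times> bool) set \<Rightarrow> ('s,'g,'a) hpol
   \<Rightarrow> (nat \<Rightarrow> ('s,'a) env_inst) \<Rightarrow> (nat \<Rightarrow> ('s,'g,'a) traj \<Rightarrow> bool) \<Rightarrow> real \<Rightarrow> real \<Rightarrow> nat \<Rightarrow> real" where
  "dagger_cost M PiLO ex envs insp CI CL T =
     real T * CI + real (card {t. t < T \<and> \<not> insp t (dagger_traj M PiLO ex envs insp t)}) * CL"

end

theory Submission
  imports Defs "HOL-Library.FuncSet"
begin

text \<open>The halving argument: every round whose inspection fails shows the majority vote of the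
  version space erring against the expert at some visited point, and the labels then remove
  every policy that voted with the majority there, i.e. at least half of the version space.
  The expert itself is never removed, so after \<open>k\<close> failed rounds
  \<open>2 ^ k \<le> |\<Pi>\<^sub>F\<^sub>U\<^sub>L\<^sub>L| = |M| * |\<Pi>\<^sub>L\<^sub>O| ^ |G|\<close>, and only failed rounds are labelled.\<close>

lemma run_records_decisions:
  assumes "(x, d) \<in> set (run f tr n x0)"
  shows "d = f x"
  using assms by (induction n arbitrary: x0) (auto simp: Let_def)

lemma mv_maximal:
  assumes "finite V"
  shows "card {h\<in>V. dec h x = y} \<le> card {h\<in>V. dec h x = mv V x}"
proof -
  have "\<exists>z. \<forall>y. card {h\<in>V. dec h x = y} \<le> card {h\<in>V. dec h x = z}"
    using Lattices_Big.ex_has_greatest_nat[of "\<lambda>_. True" y "\<lambda>y. card {h\<in>V. dec h x = y}"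
        "Suc (card V)"] assms
    by (simp add: less_Suc_eq_le card_mono)
  then show ?thesis
    unfolding mv_def by (rule someI_ex[where P = "\<lambda>z. \<forall>y. card {h\<in>V. dec h x = y}
        \<le> card {h\<in>V. dec h x = z}", rule_format])
qed

text \<open>The policies agreeing with a decision other than the vote are outnumbered by those
  agreeing with the vote, and the two groups are disjoint.\<close>
lemma mv_mistake_halves:
  assumes "finite V" and "mv V x \<noteq> y"
  shows "2 * card {h\<in>V. dec h x = y} \<le> card V"
proof -
  let ?A = "{h\<in>V. dec h x = y}" and ?B = "{h\<in>V. dec h x = mv V x}"
  have "card ?A \<le> card ?B"
    using mv_maximal[OF assms(1)] .
  moreover have "card ?A + card ?B \<le> card V"
  proof -
    have "card ?A + card ?B = card (?A \<union> ?B)"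
      using assms by (intro card_Un_disjoint[symmetric]) auto
    also have "\<dots> \<le> card V"
      using assms(1) by (intro card_mono) auto
    finally show ?thesis .
  qed
  ultimately show ?thesis by linarith
qed

lemma full_class_eq_PiE: "full_class M PiLO = M \<times> (UNIV \<rightarrow>\<^sub>E PiLO)"
  unfolding full_class_def by (auto simp: PiE_def Pi_def)

lemma finite_full_class:
  "finite M \<Longrightarrow> finite PiLO \<Longrightarrow> finite (full_class M PiLO :: ('s,'g::finite,'a) hpol set)"
  by (simp add: full_class_eq_PiE finite_PiE)

lemma card_full_class:
  assumes "finite M" and "finite PiLO"
  shows "card (full_class M PiLO :: ('s,'g::finite,'a) hpol set)
       = card M * card PiLO ^ card (UNIV :: 'g set)"
  using assms by (simp add: full_class_eq_PiE card_cartesian_product card_PiE)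

lemma log_card_full_class:
  assumes "finite M" and "finite PiLO" and "full_class M PiLO \<noteq> {}"
  shows "log 2 (card (full_class M PiLO :: ('s,'g::finite,'a) hpol set))
       = log 2 (card M) + real (card (UNIV :: 'g set)) * log 2 (card PiLO)"
proof -
  have "M \<noteq> {}" and "PiLO \<noteq> {}"
    using assms(3) by (auto simp: full_class_def)
  then have "card M > 0" and "card PiLO > 0"
    using assms(1,2) by (auto simp: card_gt_0_iff)
  then show ?thesis
    using assms(1,2) \<open>M \<noteq> {}\<close> \<open>PiLO \<noteq> {}\<close>
    by (simp add: card_full_class log_mult log_nat_power)
qed

lemma vspace_subset_full_class: "vspace M PiLO ex envs insp t \<subseteq> full_class M PiLO"
  by (induction t) (auto simp: Let_def)

lemma expert_in_vspace: "ex \<in> full_class M PiLO \<Longrightarrow> ex \<in> vspace M PiLO ex envs insp t"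
  by (induction t) (auto simp: Let_def consistent_def labels_def)

lemma vspace_Suc_subset: "vspace M PiLO ex envs insp (Suc t) \<subseteq> vspace M PiLO ex envs insp t"
  by (auto simp: Let_def)

lemma vspace_halves_on_failure:
  assumes fin: "finite (vspace M PiLO ex envs insp t)"
    and consistent_expert: "\<And>f. (\<forall>(x,d)\<in>set (episode f (envs t)). d = dec ex x)
        \<Longrightarrow> insp t (episode f (envs t))"
    and fail: "\<not> insp t (dagger_traj M PiLO ex envs insp t)"
  shows "2 * card (vspace M PiLO ex envs insp (Suc t)) \<le> card (vspace M PiLO ex envs insp t)"
proof -
  define V where "V = vspace M PiLO ex envs insp t"
  define tau where "tau = episode (mv V) (envs t)"
  have "\<not> insp t tau"
    using fail by (simp add: dagger_traj_def V_def tau_def)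
  then obtain x d where visited: "(x, d) \<in> set tau" and "d \<noteq> dec ex x"
    using consistent_expert[of "mv V"] unfolding tau_def by blast
  moreover have "d = mv V x"
    using visited unfolding tau_def episode_def by (rule run_records_decisions)
  ultimately have mistake: "mv V x \<noteq> dec ex x" by simp
  have "vspace M PiLO ex envs insp (Suc t) = {h\<in>V. consistent h (labels ex tau)}"
    using \<open>\<not> insp t tau\<close> by (simp add: V_def tau_def Let_def)
  also have "\<dots> \<subseteq> {h\<in>V. dec h x = dec ex x}"
    using visited by (force simp: consistent_def labels_def)
  finally have "card (vspace M PiLO ex envs insp (Suc t)) \<le> card {h\<in>V. dec h x = dec ex x}"
    using fin by (intro card_mono) (auto simp: V_def)
  also have "2 * \<dots> \<le> card V"
    using mv_mistake_halves[OF _ mistake] fin by (simp add: V_def)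
  finally show ?thesis by (simp add: V_def)
qed

lemma halving_count:
  fixes c :: "nat \<Rightarrow> nat"
  assumes mono: "\<And>t. c (Suc t) \<le> c t"
    and halves: "\<And>t. P t \<Longrightarrow> 2 * c (Suc t) \<le> c t"
  shows "2 ^ card {i. i < T \<and> P i} * c T \<le> c 0"
proof (induction T)
  case 0
  show ?case by simp
next
  case (Suc T)
  have split: "{i. i < Suc T \<and> P i} = {i. i < T \<and> P i} \<union> (if P T then {T} else {})"
    by (auto simp: less_Suc_eq)
  show ?case
  proof (cases "P T")
    case True
    then have "2 ^ card {i. i < Suc T \<and> P i} * c (Suc T)
        = 2 ^ card {i. i < T \<and> P i} * (2 * c (Suc T))"
      by (simp add: split)
    also have "\<dots> \<le> 2 ^ card {i. i < T \<and> P i} * c T"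
      using halves[OF True] by simp
    finally show ?thesis using Suc.IH by linarith
  next
    case False
    then have "2 ^ card {i. i < Suc T \<and> P i} * c (Suc T) \<le> 2 ^ card {i. i < T \<and> P i} * c T"
      using mono[of T] by (simp add: split)
    then show ?thesis using Suc.IH by linarith
  qed
qed

lemma halving_count_log:
  fixes c :: "nat \<Rightarrow> nat"
  assumes "\<And>t. c (Suc t) \<le> c t"
    and "\<And>t. P t \<Longrightarrow> 2 * c (Suc t) \<le> c t"
    and "c T \<ge> 1"
  shows "real (card {i. i < T \<and> P i}) \<le> log 2 (c 0)"
proof (rule le_log2_of_power)
  have "2 ^ card {i. i < T \<and> P i} \<le> 2 ^ card {i. i < T \<and> P i} * c T"
    using assms(3) by simp
  also have "\<dots> \<le> c 0"
    by (rule halving_count[where c = c]) (use assms(1,2) in auto)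
  finally show "2 ^ card {i. i < T \<and> P i} \<le> c 0" .
qed

theorem theorem2:
  fixes M :: "('s \<Rightarrow> 'g::finite) set"
    and PiLO :: "('s \<Rightarrow> 'a \<times> bool) set"
    and ex :: "('s,'g,'a) hpol"
    and envs :: "nat \<Rightarrow> ('s,'a) env_inst"
    and insp :: "nat \<Rightarrow> ('s,'g,'a) traj \<Rightarrow> bool"
    and CI CL :: real and T :: nat
  assumes "finite M" and "finite PiLO"
    and "ex \<in> full_class M PiLO"
    and "\<And>t f. (\<forall>(x,d)\<in>set (episode f (envs t)). d = dec ex x) \<Longrightarrow> insp t (episode f (envs t))"
    and "CI \<ge> 0" and "CL \<ge> 0"
  shows "dagger_cost M PiLO ex envs insp CI CL T
         \<le> real T * CI + (log 2 (card M) + real (card (UNIV :: 'g set)) * log 2 (card PiLO)) * CL"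
proof -
  let ?V = "vspace M PiLO ex envs insp"
  let ?failed = "\<lambda>t. \<not> insp t (dagger_traj M PiLO ex envs insp t)"
  have fin: "finite (?V t)" for t
    using finite_full_class[OF assms(1,2)] vspace_subset_full_class by (rule finite_subset[rotated])
  have "card (?V T) \<ge> 1"
    using expert_in_vspace[OF assms(3), of envs insp T] fin[of T] by (auto simp: Suc_le_eq card_gt_0_iff)
  moreover have "card (?V (Suc t)) \<le> card (?V t)" for t
    by (rule card_mono[OF fin vspace_Suc_subset])
  ultimately have "real (card {t. t < T \<and> ?failed t}) \<le> log 2 (card (?V 0))"
    using halving_count_log[where c = "\<lambda>t. card (?V t)" and P = ?failed]
      vspace_halves_on_failure[OF fin assms(4)]
    by blast
  also have "\<dots> = log 2 (card M) + real (card (UNIV :: 'g set)) * log 2 (card PiLO)"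
    using log_card_full_class[OF assms(1,2)] assms(3) by auto
  finally show ?thesis
    unfolding dagger_cost_def using assms(6) by (simp add: mult_right_mono)
qed

end
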